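(* For every integer $d\ge 2$, $\lambda(d,2^{d-2})\ge 1-\dfrac{1}{3^{d-1}}$.
   Context: A $d$-subcube of $\{0,1\}^n$ is a set $C\subseteq\{0,1\}^n$ obtained by fixing $n-d$ coordinates to constant values and letting the remaining $d$ coordinates vary arbitrarily; there are $\binom nd 2^{n-d}$ of them. For integers $0\le s\le 2^d$ and $S\subseteq\{0,1\}^n$, let $\Lambda(S,d,s)$ be the number of $d$-subcubes $C$ with $|S\cap C|=s$, let $\Lambda(n,d,s)=\max\{\Lambda(S,d,s): S\subseteq\{0,1\}^n\}$ for $n\ge d$, and let $\lambda(d,s)=\lim_{n\to\infty}\Lambda(n,d,s)/\big(\binom nd 2^{n-d}\big)$ (the limit exists since the ratio is non-increasing in $n$). *)

theory Defs
  imports Complex_Main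
begin

text \<open>A point of the hypercube {0,1}^n is encoded as the set of coordinates
(in {0..<n}) equal to 1; so the cube is Pow {..<n}.\<close>

definition hypercube :: "nat \<Rightarrow> nat set set" where
  "hypercube n = Pow {..<n}"

text \<open>The d-subcube with free coordinate set F (card F = d) and fixed values
given by a \<subseteq> {..<n} - F (coordinate i fixed to 1 iff i \<in> a).\<close>

definition subcube :: "nat \<Rightarrow> nat set \<Rightarrow> nat set \<Rightarrow> nat set set" where
  "subcube n F a = {x \<in> hypercube n. x - F = a}"

definition subcubes :: "nat \<Rightarrow> nat \<Rightarrow> nat set set set" where
  "subcubes n d = {subcube n F a | F a. F \<subseteq> {..<n} \<and> card F = d \<and> a \<subseteq> {..<n} - F}"

definition LambdaS :: "nat \<Rightarrow> nat set set \<Rightarrow> nat \<Rightarrow> nat \<Rightarrow> nat" where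
  "LambdaS n S d s = card {C \<in> subcubes n d. card (S \<inter> C) = s}"

definition LambdaN :: "nat \<Rightarrow> nat \<Rightarrow> nat \<Rightarrow> nat" where
  "LambdaN n d s = Max {LambdaS n S d s | S. S \<subseteq> hypercube n}"

definition lambda_dens :: "nat \<Rightarrow> nat \<Rightarrow> real" where
  "lambda_dens d s =
     lim (\<lambda>n. real (LambdaN (n + d) d s) / (real ((n + d) choose d) * 2 ^ n))"

end

theory Submission
  imports Defs
begin

text \<open>The normalised counts Lambda(n + d, d, s) / (C(n + d, d) 2^n) decrease in n: every
  d-subcube of {0,1}^(N+1) lies in exactly N + 1 - d of the 2(N + 1) facets, and each facet is a
  copy of {0,1}^N. So lambda(d, s) is their infimum, and it suffices to bound them from below for
  N = 3m. Colour coordinate j by j mod 3 and let S be the set of points with an even number of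
  ones both on the colours {0, 2} and on the colours {1, 2}. If the free coordinates of a
  subcube carry at least two colours, the two parity conditions are independent on it, so it
  contains exactly 2^(d-2) points of S. At most 3 C(m, d) <= 3^(1-d) C(3m, d) free sets are
  monochromatic.\<close>

section \<open>Subcubes\<close>

lemma subcube_subset_hypercube: "subcube n F a \<subseteq> hypercube n"
  unfolding subcube_def by auto

lemma finite_subcubes: "finite (subcubes n d)"
proof (rule finite_subset)
  show "subcubes n d \<subseteq> Pow (hypercube n)"
    unfolding subcubes_def using subcube_subset_hypercube by blast
qed (simp add: hypercube_def)

lemma Inter_subcube:
  assumes "a \<subseteq> {..<n} - F"
  shows "\<Inter>(subcube n F a) = a"
proof -
  have "a \<in> subcube n F a" using assms unfolding subcube_def hypercube_def by auto
  then show ?thesis unfolding subcube_def by blast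
qed

lemma Union_subcube:
  assumes "a \<subseteq> {..<n} - F" "F \<subseteq> {..<n}"
  shows "\<Union>(subcube n F a) = a \<union> F"
proof -
  have "a \<union> F \<in> subcube n F a" using assms unfolding subcube_def hypercube_def by auto
  then show ?thesis unfolding subcube_def by blast
qed

lemma subcube_eq_imp_eq:
  assumes "F \<subseteq> {..<n}" "a \<subseteq> {..<n} - F" "F' \<subseteq> {..<n}" "a' \<subseteq> {..<n} - F'"
    and "subcube n F a = subcube n F' a'"
  shows "F = F'" "a = a'"
proof -
  show "a = a'" using Inter_subcube assms by metis
  moreover have "a \<union> F = a' \<union> F'" using Union_subcube assms by metis
  ultimately show "F = F'" using assms(2,4) by blast
qed

lemma subcube_eq_image_Pow:
  assumes "F \<subseteq> {..<n}" "a \<subseteq> {..<n} - F"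
  shows "subcube n F a = (\<union>) a ` Pow F"
proof (intro equalityI subsetI)
  fix x assume "x \<in> subcube n F a"
  then have "x = a \<union> (x \<inter> F)" unfolding subcube_def by auto
  then show "x \<in> (\<union>) a ` Pow F" by blast
qed (use assms in \<open>auto simp: subcube_def hypercube_def\<close>)

lemma LambdaN_eq_Max_image: "LambdaN n d s = Max ((\<lambda>S. LambdaS n S d s) ` Pow (hypercube n))"
  unfolding LambdaN_def by (rule arg_cong[where f = Max]) auto

lemma LambdaS_le_LambdaN: "S \<subseteq> hypercube n \<Longrightarrow> LambdaS n S d s \<le> LambdaN n d s"
  unfolding LambdaN_eq_Max_image by (rule Max_ge) (auto simp: hypercube_def)

lemma LambdaN_attained:
  obtains S where "S \<subseteq> hypercube n" "LambdaN n d s = LambdaS n S d s"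
proof -
  have "LambdaN n d s \<in> (\<lambda>S. LambdaS n S d s) ` Pow (hypercube n)"
    unfolding LambdaN_eq_Max_image by (rule Max_in) (auto simp: hypercube_def)
  then show ?thesis using that by auto
qed

section \<open>Facets\<close>

text \<open>\<open>skip i\<close> enumerates \<open>UNIV - {i}\<close> in increasing order, so \<open>drop_coord i\<close> deletes
  coordinate \<open>i\<close> of a point and shifts the later ones down; \<open>ins_coord i b\<close> undoes this,
  giving coordinate \<open>i\<close> the value \<open>b\<close>.\<close>

definition skip :: "nat \<Rightarrow> nat \<Rightarrow> nat" where
  "skip i j = (if j < i then j else Suc j)"

definition drop_coord :: "nat \<Rightarrow> nat set \<Rightarrow> nat set" where
  "drop_coord i x = skip i -` x"

definition ins_coord :: "nat \<Rightarrow> bool \<Rightarrow> nat set \<Rightarrow> nat set" where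
  "ins_coord i b y = skip i ` y \<union> (if b then {i} else {})"

definition facet :: "nat \<Rightarrow> bool \<Rightarrow> nat set set" where
  "facet i b = {x. (i \<in> x) = b}"

lemma inj_skip: "inj (skip i)"
  unfolding skip_def by (rule injI) (auto split: if_splits)

lemma skip_neq [simp]: "skip i k \<noteq> i" "i \<noteq> skip i k"
  unfolding skip_def by simp_all

lemma range_skip: "range (skip i) = - {i}"
proof -
  have "j \<in> range (skip i)" if "j \<noteq> i" for j
  proof (cases "j < i")
    case False
    then have "skip i (j - 1) = j" using that by (simp add: skip_def)
    then show ?thesis by (metis rangeI)
  qed (simp add: skip_def range_eqI)
  then show ?thesis by auto
qed

lemma skip_cases:
  obtains "j = i" | k where "j = skip i k"
  using range_skip by blast

lemma skip_less_Suc_iff: "i < Suc N \<Longrightarrow> skip i j < Suc N \<longleftrightarrow> j < N"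
  unfolding skip_def by auto

lemma drop_coord_ins_coord: "drop_coord i (ins_coord i b y) = y"
  using range_skip inj_skip unfolding drop_coord_def ins_coord_def
  by (auto simp: inj_vimage_image_eq)

lemma ins_coord_drop_coord: "x \<in> facet i b \<Longrightarrow> ins_coord i b (drop_coord i x) = x"
  unfolding drop_coord_def ins_coord_def facet_def using range_skip by auto

lemma inj_on_drop_coord: "inj_on (drop_coord i) (facet i b)"
  by (metis ins_coord_drop_coord inj_onI)

lemma drop_coord_subset: "x \<subseteq> {..<Suc N} \<Longrightarrow> i < Suc N \<Longrightarrow> drop_coord i x \<subseteq> {..<N}"
  unfolding drop_coord_def using skip_less_Suc_iff by auto

lemma ins_coord_subset: "y \<subseteq> {..<N} \<Longrightarrow> i < Suc N \<Longrightarrow> ins_coord i b y \<subseteq> {..<Suc N}"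
  unfolding ins_coord_def using skip_less_Suc_iff by auto

lemma card_drop_coord: "i \<notin> F \<Longrightarrow> card (drop_coord i F) = card F"
  unfolding drop_coord_def by (rule card_vimage_inj[OF inj_skip]) (auto simp: range_skip)

lemma subcube_subset_facet_iff:
  assumes "F \<subseteq> {..<n}" "a \<subseteq> {..<n} - F" "i < n"
  shows "subcube n F a \<subseteq> facet i b \<longleftrightarrow> i \<notin> F \<and> b = (i \<in> a)"
proof
  assume sub: "subcube n F a \<subseteq> facet i b"
  have "a \<in> subcube n F a" using assms unfolding subcube_def hypercube_def by auto
  then have ba: "b = (i \<in> a)" using sub unfolding facet_def by auto
  moreover have "i \<notin> F"
  proof
    assume "i \<in> F"
    then have "insert i a \<in> subcube n F a" using assms unfolding subcube_def hypercube_def by auto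
    then show False using sub ba assms(2) \<open>i \<in> F\<close> unfolding facet_def by auto
  qed
  ultimately show "i \<notin> F \<and> b = (i \<in> a)" by simp
qed (auto simp: subcube_def facet_def)

lemma drop_coord_image_subcube:
  assumes "a \<subseteq> {..<Suc N} - F" "i < Suc N" "i \<notin> F"
  shows "drop_coord i ` subcube (Suc N) F a = subcube N (drop_coord i F) (drop_coord i a)"
proof (intro equalityI subsetI)
  fix y assume "y \<in> drop_coord i ` subcube (Suc N) F a"
  then obtain x where "x \<subseteq> {..<Suc N}" "x - F = a" "y = drop_coord i x"
    unfolding subcube_def hypercube_def by auto
  then show "y \<in> subcube N (drop_coord i F) (drop_coord i a)"
    using drop_coord_subset[OF _ assms(2)] unfolding subcube_def hypercube_def drop_coord_def
    by auto
next
  fix y assume "y \<in> subcube N (drop_coord i F) (drop_coord i a)"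
  then have y: "y \<subseteq> {..<N}" "y - drop_coord i F = drop_coord i a"
    unfolding subcube_def hypercube_def by auto
  define x where "x = ins_coord i (i \<in> a) y"
  have "x - F = a"
  proof (intro set_eqI)
    fix j show "j \<in> x - F \<longleftrightarrow> j \<in> a"
    proof (cases j rule: skip_cases[of _ i])
      case 1
      then show ?thesis using assms(3) by (auto simp: x_def ins_coord_def)
    next
      case (2 k)
      then have "j \<in> x \<longleftrightarrow> k \<in> y"
        using inj_skip range_skip by (auto simp: x_def ins_coord_def inj_image_mem_iff)
      then show ?thesis using y(2) 2 unfolding drop_coord_def by blast
    qed
  qed
  moreover have "x \<subseteq> {..<Suc N}" using ins_coord_subset[OF y(1) assms(2)] by (simp add: x_def)
  moreover have "y = drop_coord i x" by (simp add: x_def drop_coord_ins_coord)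
  ultimately show "y \<in> drop_coord i ` subcube (Suc N) F a"
    unfolding subcube_def hypercube_def by blast
qed

lemma drop_coord_image_subcubes:
  assumes "C \<in> subcubes (Suc N) d" "C \<subseteq> facet i b" "i < Suc N"
  shows "drop_coord i ` C \<in> subcubes N d"
proof -
  obtain F a where Fa: "C = subcube (Suc N) F a" "F \<subseteq> {..<Suc N}" "card F = d"
      "a \<subseteq> {..<Suc N} - F"
    using assms(1) unfolding subcubes_def by auto
  have iF: "i \<notin> F" using subcube_subset_facet_iff[OF Fa(2,4) assms(3)] assms(2) Fa(1) by simp
  have "drop_coord i ` C = subcube N (drop_coord i F) (drop_coord i a)"
    using Fa(1) drop_coord_image_subcube[OF Fa(4) assms(3) iF] by simp
  moreover have "drop_coord i F \<subseteq> {..<N}" using drop_coord_subset[OF Fa(2) assms(3)] .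
  moreover have "card (drop_coord i F) = d" using card_drop_coord[OF iF] Fa(3) by simp
  moreover have "drop_coord i a \<subseteq> {..<N} - drop_coord i F"
    using drop_coord_subset[of a N i] Fa(4) assms(3) unfolding drop_coord_def by auto
  ultimately show ?thesis unfolding subcubes_def by blast
qed

lemma card_subcubes_in_facet_le:
  assumes S: "S \<subseteq> hypercube (Suc N)" and i: "i < Suc N"
  shows "card {C \<in> subcubes (Suc N) d. card (S \<inter> C) = s \<and> C \<subseteq> facet i b} \<le> LambdaN N d s"
proof -
  let ?G = "{C \<in> subcubes (Suc N) d. card (S \<inter> C) = s \<and> C \<subseteq> facet i b}"
  define S' where "S' = drop_coord i ` (S \<inter> facet i b)"
  have "S' \<subseteq> hypercube N"
    using S drop_coord_subset[OF _ i] unfolding S'_def hypercube_def by auto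
  have inj: "inj_on (image (drop_coord i)) ?G"
    by (rule inj_on_image, rule inj_on_subset[OF inj_on_drop_coord]) auto
  have "image (drop_coord i) ` ?G \<subseteq> {C \<in> subcubes N d. card (S' \<inter> C) = s}"
  proof (rule image_subsetI)
    fix C assume "C \<in> ?G"
    then have C: "C \<in> subcubes (Suc N) d" "card (S \<inter> C) = s" "C \<subseteq> facet i b" by auto
    have "S' \<inter> drop_coord i ` C = drop_coord i ` (S \<inter> C)"
      unfolding S'_def
      using inj_on_image_Int[OF inj_on_drop_coord[of i b], of "S \<inter> facet i b" C] C(3)
      by (simp add: Int_absorb1 Int_assoc)
    moreover have "card (drop_coord i ` (S \<inter> C)) = card (S \<inter> C)"
      using C(3) by (intro card_image inj_on_subset[OF inj_on_drop_coord]) auto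
    ultimately show "drop_coord i ` C \<in> {C \<in> subcubes N d. card (S' \<inter> C) = s}"
      using drop_coord_image_subcubes[OF C(1,3) i] C(2) by simp
  qed
  then have "card (image (drop_coord i) ` ?G) \<le> LambdaS N S' d s"
    unfolding LambdaS_def by (intro card_mono) (simp_all add: finite_subcubes)
  also have "\<dots> \<le> LambdaN N d s" by (rule LambdaS_le_LambdaN) fact
  finally show ?thesis using card_image[OF inj] by simp
qed

lemma card_facets_containing_subcube:
  assumes "C \<in> subcubes M d"
  shows "card {(i, b). i < M \<and> C \<subseteq> facet i b} = M - d"
proof -
  obtain F a where Fa: "C = subcube M F a" "F \<subseteq> {..<M}" "card F = d" "a \<subseteq> {..<M} - F"
    using assms unfolding subcubes_def by auto
  have "{(i, b). i < M \<and> C \<subseteq> facet i b} = (\<lambda>i. (i, i \<in> a)) ` ({..<M} - F)"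
    using subcube_subset_facet_iff[OF Fa(2,4)] Fa(1) by auto
  also have "card \<dots> = M - d"
    using Fa(2,3) by (subst card_image) (auto simp: inj_on_def card_Diff_subset finite_subset)
  finally show ?thesis .
qed

lemma sum_card_subcubes_in_facets:
  assumes "G \<subseteq> subcubes M d"
  shows "(\<Sum>(i, b)\<in>{..<M} \<times> UNIV. card {C \<in> G. C \<subseteq> facet i b}) = (M - d) * card G"
proof -
  have "finite G" using assms finite_subcubes finite_subset by blast
  have "(\<Sum>(i, b)\<in>{..<M} \<times> UNIV. card {C \<in> G. C \<subseteq> facet i b})
      = card (SIGMA ib:{..<M} \<times> UNIV. {C \<in> G. C \<subseteq> facet (fst ib) (snd ib)})"
    using \<open>finite G\<close> by (subst card_SigmaI) (auto simp: case_prod_beta)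
  also have "\<dots> = card (SIGMA C:G. {(i, b). i < M \<and> C \<subseteq> facet i b})"
    by (rule bij_betw_same_card[of prod.swap]) (auto simp: bij_betw_def image_iff)
  also have "\<dots> = (\<Sum>C\<in>G. card {(i, b). i < M \<and> C \<subseteq> facet i b})"
    using \<open>finite G\<close> by (subst card_SigmaI) (auto intro: finite_subset[of _ "{..<M} \<times> UNIV"])
  also have "\<dots> = (\<Sum>C\<in>G. M - d)"
    using assms by (intro sum.cong refl card_facets_containing_subcube) auto
  also have "\<dots> = (M - d) * card G" by simp
  finally show ?thesis .
qed

lemma LambdaN_Suc_le: "(Suc N - d) * LambdaN (Suc N) d s \<le> 2 * Suc N * LambdaN N d s"
proof -
  obtain S where S: "S \<subseteq> hypercube (Suc N)" "LambdaN (Suc N) d s = LambdaS (Suc N) S d s"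
    using LambdaN_attained by blast
  let ?G = "{C \<in> subcubes (Suc N) d. card (S \<inter> C) = s}"
  have "(Suc N - d) * LambdaN (Suc N) d s = (Suc N - d) * card ?G"
    using S(2) unfolding LambdaS_def by simp
  also have "\<dots> = (\<Sum>(i, b)\<in>{..<Suc N} \<times> UNIV. card {C \<in> ?G. C \<subseteq> facet i b})"
    by (rule sum_card_subcubes_in_facets[symmetric]) auto
  also have "\<dots> \<le> (\<Sum>(i, b)\<in>{..<Suc N} \<times> (UNIV :: bool set). LambdaN N d s)"
    using card_subcubes_in_facet_le[OF S(1)] by (intro sum_mono) (auto simp: conj_assoc)
  also have "\<dots> = 2 * Suc N * LambdaN N d s" by simp
  finally show ?thesis .
qed

section \<open>The normalised counts decrease\<close>

definition lambda_ratio :: "nat \<Rightarrow> nat \<Rightarrow> nat \<Rightarrow> real" where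
  "lambda_ratio d s n = real (LambdaN (n + d) d s) / (real ((n + d) choose d) * 2 ^ n)"

lemma lambda_ratio_Suc_le: "lambda_ratio d s (Suc n) \<le> lambda_ratio d s n"
proof -
  let ?N = "n + d"
  let ?L1 = "real (LambdaN (Suc ?N) d s)" and ?L0 = "real (LambdaN ?N d s)"
  let ?c1 = "real (Suc ?N choose d)" and ?c0 = "real (?N choose d)"
  have "Suc ?N - d = Suc n" by simp
  then have "Suc n * LambdaN (Suc ?N) d s \<le> 2 * Suc ?N * LambdaN ?N d s"
    using LambdaN_Suc_le[of ?N d s] by simp
  then have step: "real (Suc n) * ?L1 \<le> 2 * real (Suc ?N) * ?L0"
    by (metis of_nat_le_iff of_nat_mult of_nat_numeral)
  have "Suc n * (Suc ?N choose d) = Suc ?N * (?N choose d)"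
    using binomial_absorb_comp[of "Suc ?N" d] \<open>Suc ?N - d = Suc n\<close> by simp
  then have binom: "real (Suc n) * ?c1 = real (Suc ?N) * ?c0"
    by (metis of_nat_mult)
  have "real (Suc ?N) * (?L1 * ?c0) = ?L1 * (real (Suc ?N) * ?c0)" by (rule mult.left_commute)
  also have "\<dots> = ?L1 * (real (Suc n) * ?c1)" by (simp only: binom)
  also have "\<dots> = real (Suc n) * ?L1 * ?c1" by (simp only: ac_simps)
  also have "\<dots> \<le> 2 * real (Suc ?N) * ?L0 * ?c1" using step by (intro mult_right_mono) simp_all
  also have "\<dots> = real (Suc ?N) * (2 * ?L0 * ?c1)" by simp
  finally have "?L1 * ?c0 \<le> 2 * ?L0 * ?c1" by simp
  moreover have "?c0 > 0" "?c1 > 0" by simp_all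
  ultimately show ?thesis unfolding lambda_ratio_def by (simp add: field_simps)
qed

lemma decseq_lambda_ratio: "decseq (lambda_ratio d s)"
  by (rule decseq_SucI) (rule lambda_ratio_Suc_le)

lemma lambda_ratio_tendsto: "lambda_ratio d s \<longlonglongrightarrow> lambda_dens d s"
proof -
  note decseq_lambda_ratio
  moreover have "\<forall>n. 0 \<le> lambda_ratio d s n" unfolding lambda_ratio_def by simp
  ultimately obtain L where "lambda_ratio d s \<longlonglongrightarrow> L" by (rule decseq_convergent)
  moreover have "lambda_dens d s = lim (lambda_ratio d s)"
    unfolding lambda_dens_def lambda_ratio_def ..
  ultimately show ?thesis by (simp add: limI)
qed

lemma lambda_dens_ge:
  assumes "\<And>n. \<exists>k\<ge>n. c \<le> lambda_ratio d s k"
  shows "c \<le> lambda_dens d s"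
proof (rule LIMSEQ_le_const[OF lambda_ratio_tendsto], intro exI allI impI)
  fix n :: nat
  obtain k where k: "n \<le> k" "c \<le> lambda_ratio d s k" using assms by blast
  have "lambda_ratio d s k \<le> lambda_ratio d s n" using decseq_lambda_ratio k(1) by (rule decseqD)
  then show "c \<le> lambda_ratio d s n" using k(2) by linarith
qed

section \<open>Two parity conditions\<close>

definition toggle :: "'a \<Rightarrow> 'a set \<Rightarrow> 'a set" where
  "toggle u y = (if u \<in> y then y - {u} else insert u y)"

lemma toggle_toggle [simp]: "toggle u (toggle u y) = y"
  unfolding toggle_def by auto

lemma even_card_toggle_Int:
  assumes "finite y"
  shows "even (card (toggle u y \<inter> P)) \<longleftrightarrow> even (card (y \<inter> P)) \<noteq> (u \<in> P)"
proof (cases "u \<in> P")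
  case True
  show ?thesis
  proof (cases "u \<in> y")
    case True
    then have "toggle u y \<inter> P = (y \<inter> P) - {u}" "u \<in> y \<inter> P"
      using \<open>u \<in> P\<close> unfolding toggle_def by auto
    then have "Suc (card (toggle u y \<inter> P)) = card (y \<inter> P)"
      using assms by (metis card_Suc_Diff1 finite_Int)
    then show ?thesis using \<open>u \<in> P\<close> by (metis even_Suc)
  next
    case False
    then have "toggle u y \<inter> P = insert u (y \<inter> P)" using \<open>u \<in> P\<close> unfolding toggle_def by auto
    then show ?thesis using assms \<open>u \<in> P\<close> False by simp
  qed
next
  case False
  then have "toggle u y \<inter> P = y \<inter> P" unfolding toggle_def by auto
  then show ?thesis using False by simp
qed

definition parity_count :: "'a set \<Rightarrow> 'a set \<Rightarrow> 'a set \<Rightarrow> bool \<Rightarrow> bool \<Rightarrow> nat" where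
  "parity_count F P Q p q = card {y \<in> Pow F. even (card (y \<inter> P)) = p \<and> even (card (y \<inter> Q)) = q}"

lemma parity_count_swap: "parity_count F P Q p q = parity_count F Q P q p"
  unfolding parity_count_def by (rule arg_cong[where f = card]) auto

lemma parity_count_toggle:
  assumes "finite F" "u \<in> F"
  shows "parity_count F P Q p q = parity_count F P Q (p \<noteq> (u \<in> P)) (q \<noteq> (u \<in> Q))"
proof -
  let ?X = "\<lambda>p q. {y \<in> Pow F. even (card (y \<inter> P)) = p \<and> even (card (y \<inter> Q)) = q}"
  have "toggle u y \<in> ?X (p \<noteq> (u \<in> P)) (q \<noteq> (u \<in> Q))" if "y \<in> ?X p q" for y p q
  proof -
    have "finite y" using that assms(1) finite_subset by auto
    moreover have "toggle u y \<subseteq> F" using that assms(2) by (auto simp: toggle_def)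
    ultimately show ?thesis using that by (simp add: even_card_toggle_Int)
  qed
  then have image_toggle: "toggle u ` ?X p q \<subseteq> ?X (p \<noteq> (u \<in> P)) (q \<noteq> (u \<in> Q))" for p q
    by blast
  have "((p \<noteq> (u \<in> P)) \<noteq> (u \<in> P)) = p" "((q \<noteq> (u \<in> Q)) \<noteq> (u \<in> Q)) = q" by auto
  then have "bij_betw (toggle u) (?X p q) (?X (p \<noteq> (u \<in> P)) (q \<noteq> (u \<in> Q)))"
    using image_toggle[of p q] image_toggle[of "p \<noteq> (u \<in> P)" "q \<noteq> (u \<in> Q)"]
    by (intro bij_betw_byWitness[where f' = "toggle u"]) simp_all
  then show ?thesis unfolding parity_count_def by (rule bij_betw_same_card)
qed

lemma sum_parity_count:
  assumes "finite F"
  shows "parity_count F P Q True True + parity_count F P Q True False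
    + parity_count F P Q False True + parity_count F P Q False False = 2 ^ card F"
proof -
  let ?X = "\<lambda>(p, q). {y \<in> Pow F. even (card (y \<inter> P)) = p \<and> even (card (y \<inter> Q)) = q}"
  have "Pow F = (\<Union>pq\<in>UNIV. ?X pq)" by auto
  also have "card \<dots> = (\<Sum>pq\<in>UNIV. card (?X pq))"
    using assms by (intro card_UN_disjoint) auto
  finally show ?thesis
    using assms by (simp add: card_Pow parity_count_def UNIV_bool flip: UNIV_Times_UNIV)
qed

lemma parity_count_eq_True_True:
  assumes "finite F" "u \<in> F" "u \<in> P" "u \<notin> Q" "v \<in> F" "v \<in> Q"
  shows "parity_count F P Q p q = parity_count F P Q True True"
proof -
  have flip_p: "parity_count F P Q p' q' = parity_count F P Q (\<not> p') q'" for p' q'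
    using parity_count_toggle[OF assms(1,2), of P Q p' q'] assms(3,4) by simp
  have flip_q: "parity_count F P Q p' q' = parity_count F P Q (p' \<noteq> (v \<in> P)) (\<not> q')" for p' q'
    using parity_count_toggle[OF assms(1,5), of P Q p' q'] assms(6) by simp
  have q_True: "parity_count F P Q p' True = parity_count F P Q True True" for p'
    using flip_p[of p' True] by (cases p') auto
  show ?thesis
    using q_True[of p] q_True[of "p \<noteq> (v \<in> P)"] flip_q[of p False] by (cases q) simp_all
qed

lemma parity_count_uniform:
  assumes "finite F" "F \<inter> P \<noteq> {}" "F \<inter> Q \<noteq> {}" "F \<inter> P \<noteq> F \<inter> Q"
  shows "4 * parity_count F P Q p q = 2 ^ card F"
proof -
  have all_eq: "parity_count F P Q p' q' = parity_count F P Q True True" for p' q'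
  proof (cases "\<exists>u\<in>F. u \<in> P \<and> u \<notin> Q")
    case True
    then show ?thesis using assms(3) parity_count_eq_True_True[OF assms(1)] by blast
  next
    case False
    then obtain u v where "u \<in> F" "u \<in> Q" "u \<notin> P" "v \<in> F" "v \<in> P" using assms(2,4) by blast
    then show ?thesis
      using parity_count_eq_True_True[OF assms(1)] parity_count_swap[of F P Q] by metis
  qed
  show ?thesis
    using all_eq[of p q] all_eq[of True False] all_eq[of False True] all_eq[of False False]
      sum_parity_count[OF assms(1), of P Q] by linarith
qed

section \<open>The construction\<close>

definition even_parity_set :: "nat \<Rightarrow> nat set \<Rightarrow> nat set \<Rightarrow> nat set set" where
  "even_parity_set n P Q = {x \<in> hypercube n. even (card (x \<inter> P)) \<and> even (card (x \<inter> Q))}"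

lemma even_card_Un_Int:
  assumes "finite a" "finite y" "a \<inter> y = {}"
  shows "even (card ((a \<union> y) \<inter> P)) \<longleftrightarrow> (even (card (y \<inter> P)) \<longleftrightarrow> even (card (a \<inter> P)))"
proof -
  have "card ((a \<union> y) \<inter> P) = card (a \<inter> P) + card (y \<inter> P)"
    using assms by (subst card_Un_disjoint[symmetric]) (auto simp: Int_Un_distrib2)
  then show ?thesis by auto
qed

lemma card_even_parity_set_Int_subcube:
  assumes F: "F \<subseteq> {..<n}" and a: "a \<subseteq> {..<n} - F"
    and PQ: "F \<inter> P \<noteq> {}" "F \<inter> Q \<noteq> {}" "F \<inter> P \<noteq> F \<inter> Q"
  shows "4 * card (even_parity_set n P Q \<inter> subcube n F a) = 2 ^ card F"
proof -
  have "finite F" using F by (rule finite_subset) simp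
  have "finite a" using a by (rule finite_subset) simp
  let ?p = "even (card (a \<inter> P))" and ?q = "even (card (a \<inter> Q))"
  let ?X = "{y \<in> Pow F. even (card (y \<inter> P)) = ?p \<and> even (card (y \<inter> Q)) = ?q}"
  have "even_parity_set n P Q \<inter> subcube n F a = (\<union>) a ` ?X"
  proof -
    have "a \<union> y \<in> even_parity_set n P Q \<longleftrightarrow> even (card (y \<inter> P)) = ?p \<and> even (card (y \<inter> Q)) = ?q"
      if "y \<subseteq> F" for y
    proof -
      have "finite y" using that \<open>finite F\<close> by (rule finite_subset)
      moreover have "a \<inter> y = {}" "a \<union> y \<subseteq> {..<n}" using that F a by auto
      ultimately show ?thesis
        using even_card_Un_Int[OF \<open>finite a\<close>] unfolding even_parity_set_def hypercube_def by simp
    qed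
    then show ?thesis unfolding subcube_eq_image_Pow[OF F a] by auto
  qed
  moreover have "inj_on ((\<union>) a) ?X" using a by (auto intro!: inj_onI)
  ultimately have "card (even_parity_set n P Q \<inter> subcube n F a) = parity_count F P Q ?p ?q"
    unfolding parity_count_def by (simp add: card_image)
  then show ?thesis using parity_count_uniform[OF \<open>finite F\<close> PQ] by simp
qed

lemma card_subcubes_with_free_sets:
  assumes "G \<subseteq> {F. F \<subseteq> {..<n} \<and> card F = d}"
  shows "card ((\<lambda>(F, a). subcube n F a) ` (SIGMA F:G. Pow ({..<n} - F))) = card G * 2 ^ (n - d)"
proof -
  have "inj_on (\<lambda>(F, a). subcube n F a) (SIGMA F:G. Pow ({..<n} - F))"
  proof (rule inj_onI, clarify)
    fix F a F' a'
    assume "F \<in> G" "a \<subseteq> {..<n} - F" "F' \<in> G" "a' \<subseteq> {..<n} - F'"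
      and "subcube n F a = subcube n F' a'"
    then show "F = F' \<and> a = a'" using assms subcube_eq_imp_eq[of F n a F' a'] by blast
  qed
  moreover have "finite G" using assms by (rule finite_subset) auto
  moreover have "card (Pow ({..<n} - F)) = 2 ^ (n - d)" if "F \<in> G" for F
    using that assms by (auto simp: card_Pow card_Diff_subset finite_subset)
  ultimately show ?thesis by (simp add: card_image)
qed

lemma mixed_residues_separate:
  fixes F :: "nat set"
  assumes "\<forall>c. \<exists>j\<in>F. j mod 3 \<noteq> c"
  defines "P \<equiv> {j. j mod 3 \<noteq> 1}" and "Q \<equiv> {j. j mod 3 \<noteq> 0}"
  shows "F \<inter> P \<noteq> {}" "F \<inter> Q \<noteq> {}" "F \<inter> P \<noteq> F \<inter> Q"
proof -
  obtain j0 where "j0 \<in> F" "j0 mod 3 \<noteq> 0" using assms(1) by blast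
  obtain j1 where "j1 \<in> F" "j1 mod 3 \<noteq> 1" using assms(1) by blast
  obtain j2 where "j2 \<in> F" "j2 mod 3 \<noteq> 2" using assms(1) by blast
  have "j2 mod 3 = 0 \<or> j2 mod 3 = 1" using \<open>j2 mod 3 \<noteq> 2\<close> by linarith
  then have "(j2 \<in> F \<inter> P) \<noteq> (j2 \<in> F \<inter> Q)" using \<open>j2 \<in> F\<close> unfolding P_def Q_def by auto
  then show "F \<inter> P \<noteq> F \<inter> Q" by blast
  show "F \<inter> P \<noteq> {}" using \<open>j1 \<in> F\<close> \<open>j1 mod 3 \<noteq> 1\<close> unfolding P_def by blast
  show "F \<inter> Q \<noteq> {}" using \<open>j0 \<in> F\<close> \<open>j0 mod 3 \<noteq> 0\<close> unfolding Q_def by blast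
qed

lemma card_residue_class:
  assumes "c < 3"
  shows "card {j. j < 3 * m \<and> j mod 3 = c} = m"
proof -
  have "{j. j < 3 * m \<and> j mod 3 = c} = (\<lambda>k. 3 * k + c) ` {..<m}"
  proof (intro equalityI subsetI)
    fix j assume "j \<in> {j. j < 3 * m \<and> j mod 3 = c}"
    then have "j = 3 * (j div 3) + c" "j div 3 < m" by auto
    then show "j \<in> (\<lambda>k. 3 * k + c) ` {..<m}" by (metis imageI lessThan_iff)
  qed (use assms in auto)
  moreover have "inj_on (\<lambda>k. 3 * k + c) {..<m}" by (rule inj_onI) simp
  ultimately show ?thesis by (simp add: card_image)
qed

lemma card_mixed_subsets_ge:
  "(3 * m choose d) - 3 * (m choose d)
    \<le> card {F. F \<subseteq> {..<3 * m} \<and> card F = d \<and> (\<forall>c. \<exists>j\<in>F. j mod 3 \<noteq> c)}"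
proof -
  let ?class = "\<lambda>c. {j. j < 3 * m \<and> j mod 3 = c}"
  define All where "All = {F. F \<subseteq> {..<3 * m} \<and> card F = d}"
  define Mono where "Mono = (\<Union>c<3. {F. F \<subseteq> ?class c \<and> card F = d})"
  have "finite (?class c)" for c by simp
  then have "card Mono \<le> (\<Sum>c<3. card {F. F \<subseteq> ?class c \<and> card F = d})"
    unfolding Mono_def by (intro card_UN_le) simp
  also have "\<dots> = 3 * (m choose d)"
    using \<open>finite (?class _)\<close> by (simp add: n_subsets card_residue_class)
  finally have "card Mono \<le> 3 * (m choose d)" .
  moreover have "card All = 3 * m choose d" unfolding All_def by (simp add: n_subsets)
  moreover have "finite Mono" unfolding Mono_def using \<open>finite (?class _)\<close> by simp
  then have "card All - card Mono \<le> card (All - Mono)" by (rule diff_card_le_card_Diff)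
  moreover have "\<exists>j\<in>F. j mod 3 \<noteq> c" if F: "F \<in> All" "F \<notin> Mono" for F c
  proof (cases "c < 3")
    case True
    then have "\<not> F \<subseteq> ?class c" using that unfolding All_def Mono_def by blast
    then show ?thesis using that(1) unfolding All_def by auto
  next
    case False
    have "{} \<in> Mono" if "{} \<in> All" using that unfolding All_def Mono_def by (intro UN_I[of 0]) auto
    then obtain j where "j \<in> F" using F by (metis ex_in_conv)
    moreover have "j mod 3 < 3" by simp
    ultimately show ?thesis using False by auto
  qed
  then have "All - Mono \<subseteq> {F. F \<subseteq> {..<3 * m} \<and> card F = d \<and> (\<forall>c. \<exists>j\<in>F. j mod 3 \<noteq> c)}"
    unfolding All_def by blast
  then have "card (All - Mono)
      \<le> card {F. F \<subseteq> {..<3 * m} \<and> card F = d \<and> (\<forall>c. \<exists>j\<in>F. j mod 3 \<noteq> c)}"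
    by (rule card_mono[rotated]) auto
  ultimately show ?thesis by linarith
qed

lemma power_mult_binomial_le: "1 \<le> k \<Longrightarrow> k ^ d * (m choose d) \<le> (k * m) choose d"
proof (induction d)
  case (Suc d)
  have absorb: "Suc j * (n choose Suc j) = (n - j) * (n choose j)" for n j
    using binomial_absorption[of j n] binomial_absorb_comp[of n j] by simp
  have "k * (m - d) \<le> k * m - d"
    using Suc.prems by (simp add: diff_mult_distrib2 diff_le_mono2)
  have "Suc d * (k ^ Suc d * (m choose Suc d)) = k * k ^ d * (Suc d * (m choose Suc d))"
    by (simp only: power_Suc ac_simps)
  also have "\<dots> = (k * (m - d)) * (k ^ d * (m choose d))"
    by (simp only: absorb ac_simps)
  also have "\<dots> \<le> (k * m - d) * ((k * m) choose d)"
    by (intro mult_mono \<open>k * (m - d) \<le> k * m - d\<close> Suc.IH Suc.prems) auto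
  also have "\<dots> = Suc d * ((k * m) choose Suc d)" by (rule absorb[symmetric])
  finally show ?case by (simp only: mult_le_cancel1)
qed simp

lemma LambdaN_mod3_ge:
  assumes "2 \<le> d"
  shows "((3 * m choose d) - 3 * (m choose d)) * 2 ^ (3 * m - d) \<le> LambdaN (3 * m) d (2 ^ (d - 2))"
proof -
  let ?n = "3 * m" and ?s = "2 ^ (d - 2) :: nat"
  let ?S = "even_parity_set ?n {j. j mod 3 \<noteq> 1} {j. j mod 3 \<noteq> 0}"
  define G where "G = {F. F \<subseteq> {..<?n} \<and> card F = d \<and> (\<forall>c. \<exists>j\<in>F. j mod 3 \<noteq> c)}"
  let ?cubes = "(\<lambda>(F, a). subcube ?n F a) ` (SIGMA F:G. Pow ({..<?n} - F))"
  have "subcube ?n F a \<in> {C \<in> subcubes ?n d. card (?S \<inter> C) = ?s}"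
    if "F \<in> G" "a \<subseteq> {..<?n} - F" for F a
  proof -
    from that have F: "F \<subseteq> {..<?n}" "card F = d" "\<forall>c. \<exists>j\<in>F. j mod 3 \<noteq> c" unfolding G_def by auto
    obtain e where "d = 2 + e" using le_Suc_ex[OF assms] by blast
    then have "(2::nat) ^ d = 4 * ?s" by (simp add: power_add)
    then have "card (?S \<inter> subcube ?n F a) = ?s"
      using card_even_parity_set_Int_subcube[OF F(1) that(2) mixed_residues_separate[OF F(3)]] F(2)
      by simp
    moreover have "subcube ?n F a \<in> subcubes ?n d" using F that(2) unfolding subcubes_def by blast
    ultimately show ?thesis by simp
  qed
  then have "?cubes \<subseteq> {C \<in> subcubes ?n d. card (?S \<inter> C) = ?s}" by auto
  then have "card ?cubes \<le> LambdaS ?n ?S d ?s"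
    unfolding LambdaS_def by (intro card_mono) (simp_all add: finite_subcubes)
  also have "\<dots> \<le> LambdaN ?n d ?s" by (rule LambdaS_le_LambdaN) (auto simp: even_parity_set_def)
  finally have "card ?cubes \<le> LambdaN ?n d ?s" .
  moreover have "card ?cubes = card G * 2 ^ (?n - d)"
    by (rule card_subcubes_with_free_sets) (auto simp: G_def)
  ultimately have "card G * 2 ^ (?n - d) \<le> LambdaN ?n d ?s" by simp
  then show ?thesis
    using card_mixed_subsets_ge[of m d] unfolding G_def by (meson le_trans mult_le_mono1)
qed

lemma lambda_ratio_mod3_ge:
  assumes "2 \<le> d" "d \<le> 3 * m"
  shows "1 - 1 / 3 ^ (d - 1) \<le> lambda_ratio d (2 ^ (d - 2)) (3 * m - d)"
proof -
  let ?B = "3 * m choose d" and ?C = "m choose d"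
  have "3 ^ d * ?C \<le> ?B" by (rule power_mult_binomial_le) simp
  moreover have "3 * ?C \<le> 3 ^ d * ?C" using assms(1) by (simp add: self_le_power)
  ultimately have "3 * ?C \<le> ?B" by linarith
  have "?B > 0" using assms(2) by simp
  have "(3::real) ^ d = 3 * 3 ^ (d - 1)" using assms(1) by (simp flip: power_Suc)
  then have "1 - 1 / 3 ^ (d - 1) = 1 - 3 / (3::real) ^ d" by simp
  also have "\<dots> \<le> 1 - 3 * ?C / ?B"
    using \<open>3 ^ d * ?C \<le> ?B\<close> \<open>?B > 0\<close>
    by (simp add: field_simps) (metis of_nat_le_iff of_nat_mult of_nat_numeral of_nat_power)
  also have "\<dots> = real ((?B - 3 * ?C) * 2 ^ (3 * m - d)) / (?B * 2 ^ (3 * m - d))"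
    using \<open>3 * ?C \<le> ?B\<close> \<open>?B > 0\<close> by (simp add: field_simps of_nat_diff)
  also have "\<dots> \<le> real (LambdaN (3 * m) d (2 ^ (d - 2))) / (?B * 2 ^ (3 * m - d))"
    using LambdaN_mod3_ge[OF assms(1), of m]
    by (intro divide_right_mono) (simp only: of_nat_le_iff, simp)
  also have "\<dots> = lambda_ratio d (2 ^ (d - 2)) (3 * m - d)"
    unfolding lambda_ratio_def using assms(2) by simp
  finally show ?thesis .
qed

theorem mainTheorem4:
  fixes d :: nat
  assumes "d \<ge> 2"
  shows "lambda_dens d (2 ^ (d - 2)) \<ge> 1 - 1 / 3 ^ (d - 1)"
proof (rule lambda_dens_ge)
  fix n
  have "1 - 1 / 3 ^ (d - 1) \<le> lambda_ratio d (2 ^ (d - 2)) (3 * (n + d) - d)"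
    using assms by (intro lambda_ratio_mod3_ge) simp_all
  moreover have "n \<le> 3 * (n + d) - d" by simp
  ultimately show "\<exists>k\<ge>n. 1 - 1 / 3 ^ (d - 1) \<le> lambda_ratio d (2 ^ (d - 2)) k" by blast
qed

end
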